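(* If $G$ is a $2$-degenerate graph with maximum degree $\Delta(G) \ge 2$, then $\chi_s'(G) \le 6\Delta(G) - 7$.
   Context: All graphs are finite and simple. A graph is $2$-degenerate if every subgraph of it has a vertex of degree at most $2$. A strong edge coloring of $G$ is an assignment of colors to the edges of $G$ such that every path with three edges receives three distinct colors; equivalently, any two distinct edges that share an endpoint, or whose endpoints are joined by an edge, receive different colors. The strong chromatic index $\chi_s'(G)$ is the minimum number of colors in a strong edge coloring of $G$. *)

theory Defs
  imports Main
begin

definition simple_graph :: "'a set \<Rightarrow> 'a set set \<Rightarrow> bool" where
  "simple_graph V E \<longleftrightarrow> finite V \<and> (\<forall>e\<in>E. e \<subseteq> V \<and> card e = 2)"

definition degree :: "'a set set \<Rightarrow> 'a \<Rightarrow> nat" where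
  "degree E v = card {e\<in>E. v \<in> e}"

definition max_degree :: "'a set \<Rightarrow> 'a set set \<Rightarrow> nat" where
  "max_degree V E = (if V = {} then 0 else Max (degree E ` V))"

definition two_degenerate :: "'a set \<Rightarrow> 'a set set \<Rightarrow> bool" where
  "two_degenerate V E \<longleftrightarrow>
     (\<forall>V' E'. V' \<subseteq> V \<and> E' \<subseteq> E \<and> (\<forall>e\<in>E'. e \<subseteq> V') \<and> V' \<noteq> {}
        \<longrightarrow> (\<exists>v\<in>V'. degree E' v \<le> 2))"

definition strong_edge_coloring :: "'a set set \<Rightarrow> ('a set \<Rightarrow> nat) \<Rightarrow> bool" where
  "strong_edge_coloring E c \<longleftrightarrow>
     (\<forall>e\<in>E. \<forall>f\<in>E. e \<noteq> f \<and>
        (e \<inter> f \<noteq> {} \<or> (\<exists>u\<in>e. \<exists>w\<in>f. {u, w} \<in> E)) \<longrightarrow> c e \<noteq> c f)"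

definition strong_chromatic_index :: "'a set set \<Rightarrow> nat" where
  "strong_chromatic_index E =
     (LEAST k. \<exists>c. strong_edge_coloring E c \<and> card (c ` E) = k)"

end

theory Submission
  imports Defs
begin

text \<open>Order the vertices so that each has at most two earlier neighbours (possible by
  2-degeneracy) and colour the edges greedily by increasing rank of their earlier endpoint.
  When the edge \<open>uv\<close> (with \<open>u\<close> before \<open>v\<close>) is coloured, the already coloured edges it
  conflicts with have an endpoint no later than \<open>u\<close>; they lie at \<open>u\<close>, at an earlier
  neighbour of \<open>u\<close> or \<open>v\<close>, or join a later neighbour of \<open>u\<close> or \<open>v\<close> to one of its at most two
  earlier neighbours. Counting these with \<open>\<Delta>\<close> gives at most \<open>6\<Delta> - 8\<close> of them.\<close>

lemma greedy_coloring:
  fixes F :: "'b set" and R :: "'b \<Rightarrow> 'b \<Rightarrow> bool" and h :: "'b \<Rightarrow> 'c::linorder"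
  assumes "finite F"
    and sym: "\<And>e f. R e f \<Longrightarrow> R f e"
    and few: "\<And>e. e \<in> F \<Longrightarrow> card {f\<in>F. f \<noteq> e \<and> R e f \<and> h f \<le> h e} < K"
  shows "\<exists>c. (\<forall>e\<in>F. c e < K) \<and> (\<forall>e\<in>F. \<forall>f\<in>F. e \<noteq> f \<and> R e f \<longrightarrow> c e \<noteq> c f)"
  using assms(1) few
proof (induction F rule: finite_ranking_induct[where f = h])
  case empty
  show ?case by simp
next
  case (insert x S)
  have "\<And>e. e \<in> S \<Longrightarrow> card {f\<in>S. f \<noteq> e \<and> R e f \<and> h f \<le> h e} < K"
    by (rule le_less_trans[OF card_mono insert.prems]) (use insert.hyps(1) in auto)
  then obtain c where c_lt: "\<forall>e\<in>S. c e < K"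
    and c_ok: "\<forall>e\<in>S. \<forall>f\<in>S. e \<noteq> f \<and> R e f \<longrightarrow> c e \<noteq> c f"
    using insert.IH by blast
  define C where "C = {f\<in>S. f \<noteq> x \<and> R x f}"
  have "card C \<le> card {f\<in>insert x S. f \<noteq> x \<and> R x f \<and> h f \<le> h x}"
    by (rule card_mono) (use insert.hyps in \<open>auto simp: C_def\<close>)
  then have "card C < K"
    using insert.prems[of x] by simp
  moreover have "finite C"
    using insert.hyps(1) by (simp add: C_def)
  ultimately have "\<not> {..<K} \<subseteq> c ` C"
    using card_mono[of "c ` C" "{..<K}"] card_image_le[of C c] by auto
  then obtain k where k: "k < K" "k \<notin> c ` C"
    by auto
  show ?case
  proof (intro exI[of _ "c(x := k)"] conjI ballI impI)
    fix e f assume "e \<in> insert x S" "f \<in> insert x S" "e \<noteq> f \<and> R e f"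
    then show "(c(x := k)) e \<noteq> (c(x := k)) f"
      using k c_ok sym unfolding C_def by (auto simp: image_iff) blast+
  qed (use c_lt k in auto)
qed

lemma card_UN_le_mult:
  assumes "finite X" and "\<And>x. x \<in> X \<Longrightarrow> card (S x) \<le> m"
  shows "card (\<Union>x\<in>X. S x) \<le> card X * m"
proof -
  have "card (\<Union>x\<in>X. S x) \<le> (\<Sum>x\<in>X. card (S x))"
    by (rule card_UN_le[OF assms(1)])
  also have "\<dots> \<le> card X * m"
    using sum_bounded_above[of X "\<lambda>x. card (S x)" m] assms(2) by simp
  finally show ?thesis .
qed

definition incident :: "'a set set \<Rightarrow> 'a \<Rightarrow> 'a set set" where
  "incident E x = {f\<in>E. x \<in> f}"

definition conflicting :: "'a set set \<Rightarrow> 'a set \<Rightarrow> 'a set \<Rightarrow> bool" where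
  "conflicting E e f \<longleftrightarrow> e \<inter> f \<noteq> {} \<or> (\<exists>u\<in>e. \<exists>w\<in>f. {u, w} \<in> E)"

lemma conflicting_sym: "conflicting E e f \<Longrightarrow> conflicting E f e"
  unfolding conflicting_def by (metis inf_commute insert_commute)

lemma strong_chromatic_index_le:
  assumes "\<forall>e\<in>E. c e < K"
    and "\<forall>e\<in>E. \<forall>f\<in>E. e \<noteq> f \<and> conflicting E e f \<longrightarrow> c e \<noteq> c f"
  shows "strong_chromatic_index E \<le> K"
proof -
  have "strong_edge_coloring E c"
    using assms(2) unfolding strong_edge_coloring_def conflicting_def by blast
  then have "strong_chromatic_index E \<le> card (c ` E)"
    unfolding strong_chromatic_index_def by (blast intro: Least_le)
  also have "\<dots> \<le> card {..<K}"
    by (rule card_mono) (use assms(1) in auto)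
  finally show ?thesis by simp
qed

lemma simple_graph_edge:
  "simple_graph V E \<Longrightarrow> {x, y} \<in> E \<Longrightarrow> x \<in> V \<and> y \<in> V \<and> x \<noteq> y"
  unfolding simple_graph_def by (auto simp: insert_absorb2)

lemma simple_graph_edge_eq:
  assumes "simple_graph V E" "f \<in> E" "a \<in> f" "b \<in> f" "a \<noteq> b"
  shows "f = {a, b}"
  using assms unfolding simple_graph_def by (auto simp: card_2_iff)

lemma simple_graph_edge_obtain:
  assumes "simple_graph V E" "f \<in> E"
  obtains a b where "f = {a, b}" "a \<noteq> b"
  using assms unfolding simple_graph_def by (auto simp: card_2_iff)

lemma simple_graph_finite_edges: "simple_graph V E \<Longrightarrow> finite E"
  unfolding simple_graph_def by (meson Pow_iff finite_Pow_iff finite_subset subsetI)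

lemma simple_graph_finite_neighbours:
  "simple_graph V E \<Longrightarrow> finite {y. {x, y} \<in> E}"
  by (rule finite_subset[of _ V]) (auto simp: simple_graph_def dest: simple_graph_edge)

lemma simple_graph_card_neighbours:
  assumes "simple_graph V E"
  shows "card {y. {x, y} \<in> E} = degree E x"
proof -
  have "bij_betw (\<lambda>y. {x, y}) {y. {x, y} \<in> E} {e\<in>E. x \<in> e}"
  proof (rule bij_betwI')
    fix e assume e: "e \<in> {e\<in>E. x \<in> e}"
    then obtain a b where "e = {a, b}"
      using simple_graph_edge_obtain[OF assms] by blast
    with e show "\<exists>y\<in>{y. {x, y} \<in> E}. e = {x, y}"
      by (auto simp: insert_commute)
  qed (auto simp: doubleton_eq_iff)
  then show ?thesis
    unfolding degree_def by (rule bij_betw_same_card)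
qed

definition earlier :: "'a set set \<Rightarrow> ('a \<Rightarrow> nat) \<Rightarrow> 'a \<Rightarrow> 'a set" where
  "earlier E r x = {y. {x, y} \<in> E \<and> r y < r x}"

definition later :: "'a set set \<Rightarrow> ('a \<Rightarrow> nat) \<Rightarrow> 'a \<Rightarrow> 'a set" where
  "later E r x = {y. {x, y} \<in> E \<and> r x < r y}"

lemma mem_earlier_iff_mem_later: "v \<in> earlier E r y \<longleftrightarrow> y \<in> later E r v"
  by (auto simp: earlier_def later_def insert_commute)

definition earlier_edges :: "'a set set \<Rightarrow> ('a \<Rightarrow> nat) \<Rightarrow> 'a \<Rightarrow> 'a set set" where
  "earlier_edges E r y = (\<lambda>z. {y, z}) ` earlier E r y"

lemma two_degenerate_low_vertex:
  assumes sg: "simple_graph V E" and "two_degenerate V E" and W: "W \<subseteq> V" "W \<noteq> {}"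
  shows "\<exists>x\<in>W. card {y\<in>W. {x, y} \<in> E} \<le> 2"
proof -
  define E' where "E' = {e\<in>E. e \<subseteq> W}"
  obtain x where x: "x \<in> W" "degree E' x \<le> 2"
    using assms unfolding two_degenerate_def E'_def by (metis (no_types, lifting) mem_Collect_eq subsetI)
  have "simple_graph W E'"
    using sg W finite_subset unfolding simple_graph_def E'_def by blast
  moreover have "{y\<in>W. {x, y} \<in> E} = {y. {x, y} \<in> E'}"
    using x(1) by (auto simp: E'_def)
  ultimately show ?thesis
    using x simple_graph_card_neighbours by metis
qed

lemma two_degenerate_ordering:
  assumes sg: "simple_graph V E" and td: "two_degenerate V E"
  obtains r :: "'a \<Rightarrow> nat" where "inj_on r V" "\<And>x. x \<in> V \<Longrightarrow> card (earlier E r x) \<le> 2"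
proof -
  have "finite V"
    using sg by (simp add: simple_graph_def)
  then have "\<exists>r::'a \<Rightarrow> nat. inj_on r V \<and> (\<forall>z\<in>V. card {y\<in>V. {z, y} \<in> E \<and> r y < r z} \<le> 2)"
  proof (induction V rule: finite_remove_induct)
    case (remove W)
    obtain x where x: "x \<in> W" "card {y\<in>W. {x, y} \<in> E} \<le> 2"
      using two_degenerate_low_vertex[OF sg td remove(3,2)] by blast
    obtain r' :: "'a \<Rightarrow> nat" where r': "inj_on r' (W - {x})"
      "\<forall>z\<in>W - {x}. card {y\<in>W - {x}. {z, y} \<in> E \<and> r' y < r' z} \<le> 2"
      using remove.IH[OF x(1)] by blast
    \<comment> \<open>\<open>x\<close> goes last: its earlier neighbours are all its neighbours in \<open>W\<close>,
      and it is nobody's earlier neighbour\<close>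
    define r where "r = r'(x := Suc (Max (r' ` (W - {x}))))"
    have x_last: "r' z < r x" if "z \<in> W - {x}" for z
      using that remove(1) by (simp add: r_def le_imp_less_Suc)
    have "inj_on r W"
      using r'(1) x_last unfolding inj_on_def by (metis DiffI fun_upd_other less_irrefl r_def singletonD)
    moreover have "card {y\<in>W. {z, y} \<in> E \<and> r y < r z} \<le> 2" if "z \<in> W" for z
    proof (cases "z = x")
      case True
      have "card {y\<in>W. {z, y} \<in> E \<and> r y < r z} \<le> card {y\<in>W. {x, y} \<in> E}"
        by (rule card_mono) (use remove(1) True in auto)
      then show ?thesis
        using x(2) by simp
    next
      case False
      then have "{y\<in>W. {z, y} \<in> E \<and> r y < r z} = {y\<in>W - {x}. {z, y} \<in> E \<and> r' y < r' z}"
        using that x_last[of z] by (auto simp: r_def)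
      then show ?thesis
        using r'(2) that False by simp
    qed
    ultimately show ?case by blast
  qed simp
  then obtain r :: "'a \<Rightarrow> nat" where "inj_on r V" "\<forall>z\<in>V. card {y\<in>V. {z, y} \<in> E \<and> r y < r z} \<le> 2"
    by blast
  moreover have "{y\<in>V. {z, y} \<in> E \<and> r y < r z} = earlier E r z" for z
    using simple_graph_edge[OF sg] by (auto simp: earlier_def)
  ultimately show thesis
    using that by simp
qed

locale ordered_graph =
  fixes V :: "'a set" and E :: "'a set set" and r :: "'a \<Rightarrow> nat" and D :: nat
  assumes simple: "simple_graph V E"
    and inj: "inj_on r V"
    and card_earlier_le_2: "\<And>x. x \<in> V \<Longrightarrow> card (earlier E r x) \<le> 2"
    and degree_le: "\<And>x. x \<in> V \<Longrightarrow> degree E x \<le> D"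
begin

lemma edge_vertices: "{x, y} \<in> E \<Longrightarrow> x \<in> V \<and> y \<in> V \<and> x \<noteq> y"
  using simple_graph_edge[OF simple] .

lemma edge_rank_neq: "{x, y} \<in> E \<Longrightarrow> r x \<noteq> r y"
  using edge_vertices inj by (auto simp: inj_on_def)

lemma edge_obtain_ordered:
  assumes "e \<in> E"
  obtains u v where "e = {u, v}" "r u < r v"
proof -
  obtain a b where ab: "e = {a, b}"
    using simple_graph_edge_obtain[OF simple assms] by blast
  then have "r a \<noteq> r b"
    using edge_rank_neq assms by simp
  then show thesis
    using that ab by (metis insert_commute linorder_neqE_nat)
qed

lemma finite_edges: "finite E"
  using simple_graph_finite_edges[OF simple] .

lemma finite_earlier: "finite (earlier E r x)"
  and finite_later: "finite (later E r x)"
  using simple_graph_finite_neighbours[OF simple, of x]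
  by (auto simp: earlier_def later_def elim: rev_finite_subset)

lemma card_incident_le: "x \<in> V \<Longrightarrow> card (incident E x) \<le> D"
  using degree_le by (simp add: degree_def incident_def)

lemma card_earlier_later_le: "x \<in> V \<Longrightarrow> card (earlier E r x) + card (later E r x) \<le> D"
proof -
  assume "x \<in> V"
  have "card (earlier E r x) + card (later E r x) = card (earlier E r x \<union> later E r x)"
    by (rule card_Un_disjoint[symmetric, OF finite_earlier finite_later]) (auto simp: earlier_def later_def)
  also have "\<dots> \<le> card {y. {x, y} \<in> E}"
    by (rule card_mono[OF simple_graph_finite_neighbours[OF simple]]) (auto simp: earlier_def later_def)
  finally show ?thesis
    using simple_graph_card_neighbours[OF simple] degree_le \<open>x \<in> V\<close> by (metis le_trans)
qed

lemma card_earlier_edges_le: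
  assumes "p \<in> earlier E r y"
  shows "card (earlier_edges E r y - {{y, p}}) \<le> 1"
proof -
  have "earlier_edges E r y - {{y, p}} = (\<lambda>z. {y, z}) ` (earlier E r y - {p})"
    by (auto simp: earlier_edges_def doubleton_eq_iff)
  then have "card (earlier_edges E r y - {{y, p}}) \<le> card (earlier E r y) - 1"
    using card_image_le[of "earlier E r y - {p}"] assms finite_earlier by simp
  moreover have "y \<in> V"
    using assms edge_vertices by (auto simp: earlier_def)
  ultimately show ?thesis
    using card_earlier_le_2 by fastforce
qed

lemma edge_at_later_vertex:
  assumes "{p, y} \<in> E" "r p < r y" "f \<in> E" "y \<in> f" "b \<in> f" "r b \<le> r p" "p \<notin> f"
  shows "f \<in> earlier_edges E r y - {{y, p}}"
proof -
  have "b \<noteq> y"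
    using assms(2,6) by auto
  then have "f = {y, b}"
    using simple_graph_edge_eq[OF simple assms(3-5)] by simp
  then show ?thesis
    using assms by (auto simp: earlier_edges_def earlier_def)
qed

lemma conflicting_edges_cover:
  assumes e: "{u, v} \<in> E" "r u < r v"
  shows "{f\<in>E. f \<noteq> {u, v} \<and> conflicting E {u, v} f \<and> (\<exists>b\<in>f. r b \<le> r u)}
    \<subseteq> (incident E u - {{u, v}})
    \<union> (\<Union>w\<in>earlier E r v - {u}. incident E w)
    \<union> (\<Union>y\<in>later E r v. earlier_edges E r y - {{y, v}})
    \<union> (\<Union>x\<in>earlier E r u. incident E x - {{u, x}})
    \<union> (\<Union>y\<in>later E r u - {v}. earlier_edges E r y - {{y, u}})"
    (is "_ \<subseteq> ?A1 \<union> ?A2 \<union> ?A3 \<union> ?A4 \<union> ?A5")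
proof
  fix f assume "f \<in> {f\<in>E. f \<noteq> {u, v} \<and> conflicting E {u, v} f \<and> (\<exists>b\<in>f. r b \<le> r u)}"
  then obtain b where f: "f \<in> E" "f \<noteq> {u, v}" "conflicting E {u, v} f" and b: "b \<in> f" "r b \<le> r u"
    by blast
  consider (at_u) "u \<in> f" | (at_v) "u \<notin> f" "v \<in> f" | (apart) "u \<notin> f" "v \<notin> f"
    by blast
  then show "f \<in> ?A1 \<union> ?A2 \<union> ?A3 \<union> ?A4 \<union> ?A5"
  proof cases
    case at_u
    then have "f \<in> ?A1"
      using f by (auto simp: incident_def)
    then show ?thesis by blast
  next
    case at_v
    have "b \<noteq> v"
      using b e by auto
    then have "f = {v, b}"
      using simple_graph_edge_eq[OF simple f(1) at_v(2) b(1)] by simp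
    then have "b \<in> earlier E r v - {u}"
      using f(1) b e at_v(1) by (auto simp: earlier_def)
    then have "f \<in> ?A2"
      using f(1) b(1) by (auto simp: incident_def)
    then show ?thesis by blast
  next
    case apart
    then obtain p y where p: "p = u \<or> p = v" and y: "y \<in> f" "{p, y} \<in> E"
      using f(3) by (auto simp: conflicting_def)
    have "p \<notin> f"
      using p apart by auto
    consider (earlier_v) "p = v" "r y < r v" | (later_v) "p = v" "r v < r y"
      | (earlier_u) "p = u" "r y < r u" | (later_u) "p = u" "r u < r y"
      using p edge_rank_neq[OF y(2)] by (metis linorder_neqE_nat)
    then show ?thesis
    proof cases
      case earlier_v
      then have "f \<in> ?A2"
        using y f(1) apart by (auto simp: earlier_def incident_def)
      then show ?thesis by blast
    next
      case later_v
      then have "f \<in> ?A3"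
        using edge_at_later_vertex[OF y(2) _ f(1) y(1) b(1)] y(2) b(2) e(2) \<open>p \<notin> f\<close>
        by (auto simp: later_def)
      then show ?thesis by blast
    next
      case earlier_u
      then have "f \<in> ?A4"
        using y f(1) \<open>p \<notin> f\<close> by (auto simp: earlier_def incident_def)
      then show ?thesis by blast
    next
      case later_u
      then have "f \<in> ?A5"
        using edge_at_later_vertex[OF y(2) _ f(1) y(1) b(1)] y b(2) \<open>p \<notin> f\<close> \<open>v \<notin> f\<close>
        by (auto simp: later_def)
      then show ?thesis by blast
    qed
  qed
qed

lemma card_conflicting_edges_le:
  assumes e: "{u, v} \<in> E" "r u < r v"
  shows "card {f\<in>E. f \<noteq> {u, v} \<and> conflicting E {u, v} f \<and> (\<exists>b\<in>f. r b \<le> r u)} \<le> 6 * D - 8"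
proof -
  let ?A1 = "incident E u - {{u, v}}"
  let ?A2 = "\<Union>w\<in>earlier E r v - {u}. incident E w"
  let ?A3 = "\<Union>y\<in>later E r v. earlier_edges E r y - {{y, v}}"
  let ?A4 = "\<Union>x\<in>earlier E r u. incident E x - {{u, x}}"
  let ?A5 = "\<Union>y\<in>later E r u - {v}. earlier_edges E r y - {{y, u}}"
  have uv: "u \<in> V" "v \<in> V" "u \<in> earlier E r v" "v \<in> later E r u"
    using e edge_vertices by (auto simp: earlier_def later_def insert_commute)
  have in_V: "\<And>x y. x \<in> earlier E r y \<or> x \<in> later E r y \<Longrightarrow> x \<in> V"
    using edge_vertices by (auto simp: earlier_def later_def)
  have "?A1 \<union> ?A2 \<union> ?A3 \<union> ?A4 \<union> ?A5 \<subseteq> E"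
    by (auto simp: incident_def earlier_edges_def earlier_def)
  then have "card {f\<in>E. f \<noteq> {u, v} \<and> conflicting E {u, v} f \<and> (\<exists>b\<in>f. r b \<le> r u)}
      \<le> card (?A1 \<union> ?A2 \<union> ?A3 \<union> ?A4 \<union> ?A5)"
    by (rule card_mono[OF rev_finite_subset[OF finite_edges] conflicting_edges_cover[OF e]])
  also have "\<dots> \<le> card ?A1 + card ?A2 + card ?A3 + card ?A4 + card ?A5"
    by (meson add_mono card_Un_le le_refl order_trans)
  also have "\<dots> \<le> (D - 1) + (card (earlier E r v) - 1) * D + card (later E r v)
      + card (earlier E r u) * (D - 1) + (card (later E r u) - 1)"
  proof (intro add_mono)
    show "card ?A1 \<le> D - 1"
      using card_incident_le[OF uv(1)] e(1) by (simp add: incident_def card_Diff_singleton)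
    have "card ?A2 \<le> card (earlier E r v - {u}) * D"
      using finite_earlier card_incident_le in_V by (intro card_UN_le_mult) auto
    then show "card ?A2 \<le> (card (earlier E r v) - 1) * D"
      using uv(3) by simp
    have "card ?A3 \<le> card (later E r v) * 1"
      using card_earlier_edges_le mem_earlier_iff_mem_later[of v]
      by (intro card_UN_le_mult finite_later) simp
    then show "card ?A3 \<le> card (later E r v)"
      by simp
    show "card ?A4 \<le> card (earlier E r u) * (D - 1)"
    proof (intro card_UN_le_mult finite_earlier)
      fix x assume x: "x \<in> earlier E r u"
      then have "card (incident E x) \<le> D" "{u, x} \<in> incident E x"
        using card_incident_le in_V by (auto simp: incident_def earlier_def)
      then show "card (incident E x - {{u, x}}) \<le> D - 1"
        by (simp add: card_Diff_singleton)
    qed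
    have "card ?A5 \<le> card (later E r u - {v}) * 1"
      using card_earlier_edges_le mem_earlier_iff_mem_later[of u] finite_later
      by (intro card_UN_le_mult) simp_all
    then show "card ?A5 \<le> card (later E r u) - 1"
      using uv(4) by simp
  qed
  also have "\<dots> \<le> 6 * D - 8"
  proof -
    have "card (earlier E r v) \<ge> 1" "card (later E r u) \<ge> 1"
      using uv(3,4) finite_earlier[of v] finite_later[of u] by (auto simp: Suc_le_eq card_gt_0_iff)
    then have "card (earlier E r v) = 1 \<or> card (earlier E r v) = 2"
      "card (earlier E r u) = 0 \<or> card (earlier E r u) = 1 \<or> card (earlier E r u) = 2"
      using card_earlier_le_2 uv(1,2) by fastforce+
    moreover have "card (earlier E r v) + card (later E r v) \<le> D"
      "card (earlier E r u) + card (later E r u) \<le> D"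
      using card_earlier_later_le uv by auto
    ultimately show ?thesis
      using \<open>card (later E r u) \<ge> 1\<close> by (elim disjE) (simp_all add: algebra_simps, arith+)
  qed
  finally show ?thesis .
qed

lemma conflict_free_coloring:
  assumes "2 \<le> D"
  shows "\<exists>c. (\<forall>e\<in>E. c e < 6 * D - 7) \<and> (\<forall>e\<in>E. \<forall>f\<in>E. e \<noteq> f \<and> conflicting E e f \<longrightarrow> c e \<noteq> c f)"
proof (rule greedy_coloring[OF finite_edges conflicting_sym, where h = "\<lambda>f. Min (r ` f)"])
  fix e assume "e \<in> E"
  then obtain u v where uv: "e = {u, v}" "r u < r v" "{u, v} \<in> E"
    using edge_obtain_ordered by metis
  have "{f\<in>E. f \<noteq> e \<and> conflicting E e f \<and> Min (r ` f) \<le> Min (r ` e)}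
      \<subseteq> {f\<in>E. f \<noteq> {u, v} \<and> conflicting E {u, v} f \<and> (\<exists>b\<in>f. r b \<le> r u)}"
  proof (intro subsetI CollectI conjI)
    fix f assume f: "f \<in> {f\<in>E. f \<noteq> e \<and> conflicting E e f \<and> Min (r ` f) \<le> Min (r ` e)}"
    then obtain a b where "f = {a, b}"
      using simple_graph_edge_obtain[OF simple] by blast
    moreover have "Min (r ` e) = r u"
      using uv by simp
    ultimately show "\<exists>b\<in>f. r b \<le> r u"
      using f by (auto simp: min_le_iff_disj)
  qed (use uv in simp_all)
  then have "card {f\<in>E. f \<noteq> e \<and> conflicting E e f \<and> Min (r ` f) \<le> Min (r ` e)}
      \<le> card {f\<in>E. f \<noteq> {u, v} \<and> conflicting E {u, v} f \<and> (\<exists>b\<in>f. r b \<le> r u)}"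
    by (rule card_mono[rotated]) (simp add: finite_edges)
  also have "\<dots> \<le> 6 * D - 8"
    by (rule card_conflicting_edges_le[OF uv(3,2)])
  finally show "card {f\<in>E. f \<noteq> e \<and> conflicting E e f \<and> Min (r ` f) \<le> Min (r ` e)} < 6 * D - 7"
    using assms by linarith
qed

end

theorem corollary2:
  fixes V :: "'a set" and E :: "'a set set"
  assumes "simple_graph V E"
    and "two_degenerate V E"
    and "max_degree V E \<ge> 2"
  shows "strong_chromatic_index E \<le> 6 * max_degree V E - 7"
proof -
  obtain r where "inj_on r V" "\<And>x. x \<in> V \<Longrightarrow> card (earlier E r x) \<le> 2"
    using two_degenerate_ordering[OF assms(1,2)] by blast
  moreover have "\<And>x. x \<in> V \<Longrightarrow> degree E x \<le> max_degree V E"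
    using assms(1) by (auto simp: max_degree_def simple_graph_def)
  ultimately interpret ordered_graph V E r "max_degree V E"
    using assms(1) by unfold_locales
  show ?thesis
    using conflict_free_coloring[OF assms(3)] strong_chromatic_index_le by blast
qed

end
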